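(* Let $P_0,P_1,P_2\in\mathbb H$ be distinct, labelled so that $\chi:=\langle P_0\tilde\times P_1,P_2\rangle\ge0$ and so that $d_0=\max\{d_0,d_1,d_2\}$, where $d_i:=\sqrt{1-2\langle P_{i+1},P_{i+2}\rangle}$ for $i\in\mathbb Z/3\mathbb Z$. Let $\varepsilon\in\{-1,1\}$, $\alpha:=-1+\langle P_0,P_1\rangle+\langle P_1,P_2\rangle+\langle P_2,P_0\rangle$, $\gamma:=3(d_0^2+1)(d_1^2+1)(d_2^2+1)$, $$r_d:=\frac4\gamma\Bigl(-2\alpha(d_0d_1d_2-d_0-d_1-d_2)-2\varepsilon\chi(d_0d_1+d_1d_2+d_2d_0-1)\Bigr),\qquad r_i:=\frac{|r_d|}{d_{i+1}+d_{i+2}}.$$ Then for every $i\in\mathbb Z/3\mathbb Z$, $$r_i\le\rho:=\frac23+\frac2{27}+\frac1{3\sqrt3}\approx0.93319.$$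
   Context: $\langle v,w\rangle=-v_1w_1+v_2w_2+v_3w_3$ on $\mathbb R^3$; $\mathbb H=\{P\in\mathbb R^3:\langle P,P\rangle=-1,\ P_1\ge1\}$; $v\tilde\times w:=J(v\times w)$ with $J=\mathrm{diag}(-1,1,1)$ and $\times$ the Euclidean cross product. *)

theory Defs
  imports "HOL-Analysis.Analysis" "HOL-Analysis.Cross3"
begin

definition mink :: "real^3 \<Rightarrow> real^3 \<Rightarrow> real" where
  "mink v w = - (v$1 * w$1) + v$2 * w$2 + v$3 * w$3"

text \<open>Hyperboloid model of the hyperbolic plane.\<close>
definition hyp :: "(real^3) set" where
  "hyp = {P. mink P P = -1 \<and> P$1 \<ge> 1}"

definition Jmat :: "real^3 \<Rightarrow> real^3" where
  "Jmat v = (\<chi> i. if i = 1 then - (v$i) else v$i)"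

definition lcross :: "real^3 \<Rightarrow> real^3 \<Rightarrow> real^3" where
  "lcross v w = Jmat (cross3 v w)"

text \<open>Points indexed by Z/3Z are given as P :: nat => real^3, indices taken mod 3.\<close>
definition dist_d :: "(nat \<Rightarrow> real^3) \<Rightarrow> nat \<Rightarrow> real" where
  "dist_d P i = sqrt (1 - 2 * mink (P ((i+1) mod 3)) (P ((i+2) mod 3)))"

definition chi_val :: "(nat \<Rightarrow> real^3) \<Rightarrow> real" where
  "chi_val P = mink (lcross (P 0) (P 1)) (P 2)"

definition alpha_val :: "(nat \<Rightarrow> real^3) \<Rightarrow> real" where
  "alpha_val P = -1 + mink (P 0) (P 1) + mink (P 1) (P 2) + mink (P 2) (P 0)"

definition gamma_val :: "(nat \<Rightarrow> real^3) \<Rightarrow> real" where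
  "gamma_val P = 3 * ((dist_d P 0)^2 + 1) * ((dist_d P 1)^2 + 1) * ((dist_d P 2)^2 + 1)"

definition r_d :: "(nat \<Rightarrow> real^3) \<Rightarrow> real \<Rightarrow> real" where
  "r_d P \<epsilon> = 4 / gamma_val P *
     (- 2 * alpha_val P * (dist_d P 0 * dist_d P 1 * dist_d P 2 - dist_d P 0 - dist_d P 1 - dist_d P 2)
      - 2 * \<epsilon> * chi_val P * (dist_d P 0 * dist_d P 1 + dist_d P 1 * dist_d P 2 + dist_d P 2 * dist_d P 0 - 1))"

definition r_i :: "(nat \<Rightarrow> real^3) \<Rightarrow> real \<Rightarrow> nat \<Rightarrow> real" where
  "r_i P \<epsilon> i = \<bar>r_d P \<epsilon>\<bar> / (dist_d P ((i+1) mod 3) + dist_d P ((i+2) mod 3))"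

definition rho :: real where
  "rho = 2/3 + 2/27 + 1 / (3 * sqrt 3)"

end

theory Submission
  imports Defs
begin

text \<open>
  Put \<open>c\<^sub>i = -\<langle>P\<^sub>i\<^sub>+\<^sub>1, P\<^sub>i\<^sub>+\<^sub>2\<rangle>\<close>, so that \<open>d\<^sub>i\<^sup>2 = 1 + 2c\<^sub>i\<close>. The reverse Cauchy-Schwarz inequality
  on the hyperboloid gives \<open>c\<^sub>i \<ge> 1\<close>, i.e. \<open>d\<^sub>i \<ge> \<surd>3\<close>; moreover \<open>2\<alpha> = 1 - (d\<^sub>0\<^sup>2 + d\<^sub>1\<^sup>2 + d\<^sub>2\<^sup>2)\<close>.
  The number \<open>\<chi>\<close> is the triple product of \<open>P\<^sub>0, P\<^sub>1, P\<^sub>2\<close>, so \<open>\<chi>\<^sup>2\<close> is minus their Minkowski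
  Gram determinant: \<open>\<chi>\<^sup>2 + (c\<^sub>0 - c\<^sub>1c\<^sub>2)\<^sup>2 = (c\<^sub>1\<^sup>2 - 1)(c\<^sub>2\<^sup>2 - 1)\<close>. Hence \<open>|\<chi>| \<le> c\<^sub>1c\<^sub>2\<close> and
  \<open>c\<^sub>0 \<le> 2c\<^sub>1c\<^sub>2\<close>, the latter giving \<open>d\<^sub>0 \<le> d\<^sub>1d\<^sub>2\<close>. What remains is a polynomial inequality
  in \<open>d\<^sub>0 \<ge> d\<^sub>1, d\<^sub>2 \<ge> \<surd>3\<close>: bounding the numerator of \<open>r\<^sub>d\<close> term by term against
  \<open>\<gamma>(d\<^sub>1 + d\<^sub>2)\<close> yields \<open>|r\<^sub>d| \<le> \<rho>(d\<^sub>1 + d\<^sub>2)\<close>, and \<open>d\<^sub>1 + d\<^sub>2\<close> is the smallest of the three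
  denominators of the \<open>r\<^sub>i\<close>.
\<close>

lemma mink_le_minus_one_if_hyp:
  assumes "P \<in> hyp" "Q \<in> hyp"
  shows "mink P Q \<le> -1"
proof -
  have P: "(P$2)^2 + (P$3)^2 = (P$1)^2 - 1" "1 \<le> P$1"
   and Q: "(Q$2)^2 + (Q$3)^2 = (Q$1)^2 - 1" "1 \<le> Q$1"
    using assms unfolding hyp_def mink_def by (auto simp: power2_eq_square)
  have "(P$2*Q$2 + P$3*Q$3)^2 \<le> ((P$2)^2 + (P$3)^2) * ((Q$2)^2 + (Q$3)^2)"
    using zero_le_power2[of "P$2*Q$3 - P$3*Q$2"] by (simp add: power2_eq_square algebra_simps)
  also have "\<dots> = (P$1*Q$1 - 1)^2 - (P$1 - Q$1)^2"
    unfolding P Q by (simp add: power2_eq_square algebra_simps)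
  also have "\<dots> \<le> (P$1*Q$1 - 1)^2" by simp
  finally have "\<bar>P$2*Q$2 + P$3*Q$3\<bar> \<le> \<bar>P$1*Q$1 - 1\<bar>"
    by (simp only: abs_le_square_iff)
  moreover have "1 \<le> P$1*Q$1" using P(2) Q(2) mult_mono[of 1 "P$1" 1 "Q$1"] by simp
  ultimately show ?thesis unfolding mink_def by linarith
qed

text \<open>\<open>mink (lcross u v) w\<close> is the Euclidean determinant \<open>det M\<close> of the columns \<open>u, v, w\<close>,
  and the Gram matrix is \<open>M\<^sup>T J M\<close> with \<open>det J = -1\<close>.\<close>

lemma mink_lcross_square:
  "(mink (lcross u v) w)^2 = - (mink u u * (mink v v * mink w w - (mink v w)^2)
     - mink u v * (mink u v * mink w w - mink v w * mink w u)
     + mink w u * (mink u v * mink v w - mink v v * mink w u))"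
  unfolding lcross_def Jmat_def mink_def cross3_def
  by (simp add: vector_def power2_eq_square algebra_simps)

lemma gram_determinant_bounds:
  fixes a b c x :: real
  assumes b: "1 \<le> b" and c: "1 \<le> c" and x: "x^2 = 1 - a^2 - b^2 - c^2 + 2*a*b*c"
  shows "\<bar>x\<bar> \<le> b*c" and "a \<le> 2*b*c"
proof -
  have "x^2 + (a - b*c)^2 = (b*c)^2 - (b^2 + c^2 - 1)"
    using x by (simp add: power2_eq_square algebra_simps)
  moreover have "1 \<le> b^2" "0 \<le> c^2" using b by simp_all
  ultimately have "x^2 \<le> (b*c)^2" "(a - b*c)^2 \<le> (b*c)^2"
    using zero_le_power2[of x] zero_le_power2[of "a - b*c"] by linarith+
  then have "\<bar>x\<bar> \<le> \<bar>b*c\<bar>" "\<bar>a - b*c\<bar> \<le> \<bar>b*c\<bar>"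
    by (simp_all only: abs_le_square_iff)
  moreover have "0 \<le> b*c" using b c by simp
  ultimately show "\<bar>x\<bar> \<le> b*c" "a \<le> 2*b*c" by auto
qed

lemma dist_d_hyp:
  assumes "P ` {..<3} \<subseteq> hyp"
  shows "(dist_d P i)^2 = 1 - 2 * mink (P ((i+1) mod 3)) (P ((i+2) mod 3))"
    and "sqrt 3 \<le> dist_d P i"
proof -
  have "mink (P ((i+1) mod 3)) (P ((i+2) mod 3)) \<le> -1"
    using assms by (intro mink_le_minus_one_if_hyp) auto
  then show "(dist_d P i)^2 = 1 - 2 * mink (P ((i+1) mod 3)) (P ((i+2) mod 3))"
    and "sqrt 3 \<le> dist_d P i"
    unfolding dist_d_def by simp_all
qed

lemma alpha_val_hyp:
  assumes "P ` {..<3} \<subseteq> hyp"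
  shows "2 * alpha_val P = 1 - ((dist_d P 0)^2 + (dist_d P 1)^2 + (dist_d P 2)^2)"
  using dist_d_hyp(1)[OF assms, of 0] dist_d_hyp(1)[OF assms, of 1] dist_d_hyp(1)[OF assms, of 2]
  unfolding alpha_val_def by (simp add: numeral_2_eq_2)

lemma chi_val_dist_d_bounds_hyp:
  assumes "P ` {..<3} \<subseteq> hyp"
  shows "\<bar>chi_val P\<bar> \<le> ((dist_d P 1)^2 - 1) * ((dist_d P 2)^2 - 1) / 4"
    and "dist_d P 0 \<le> dist_d P 1 * dist_d P 2"
proof -
  define c0 c1 c2 where "c0 = - mink (P 1) (P 2)" and "c1 = - mink (P 2) (P 0)"
    and "c2 = - mink (P 0) (P 1)"
  have d: "(dist_d P 0)^2 = 1 + 2*c0" "(dist_d P 1)^2 = 1 + 2*c1" "(dist_d P 2)^2 = 1 + 2*c2"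
    using dist_d_hyp(1)[OF assms, of 0] dist_d_hyp(1)[OF assms, of 1] dist_d_hyp(1)[OF assms, of 2]
    unfolding c0_def c1_def c2_def by (simp_all add: numeral_2_eq_2)
  have on_hyp: "P 0 \<in> hyp" "P 1 \<in> hyp" "P 2 \<in> hyp" using assms by auto
  then have self: "mink (P 0) (P 0) = -1" "mink (P 1) (P 1) = -1" "mink (P 2) (P 2) = -1"
    by (simp_all add: hyp_def)
  have c1: "1 \<le> c1" and c2: "1 \<le> c2"
    using mink_le_minus_one_if_hyp[OF on_hyp(3,1)] mink_le_minus_one_if_hyp[OF on_hyp(1,2)]
    unfolding c1_def c2_def by linarith+
  have chi: "(chi_val P)^2 = 1 - c0^2 - c1^2 - c2^2 + 2*c0*c1*c2"
    unfolding chi_val_def mink_lcross_square self c0_def c1_def c2_def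
    by (simp add: power2_eq_square algebra_simps)
  show "\<bar>chi_val P\<bar> \<le> ((dist_d P 1)^2 - 1) * ((dist_d P 2)^2 - 1) / 4"
    using gram_determinant_bounds(1)[OF c1 c2 chi] unfolding d by simp
  have "(dist_d P 0)^2 \<le> (dist_d P 1 * dist_d P 2)^2"
    using gram_determinant_bounds(2)[OF c1 c2 chi] c1 c2
    unfolding power_mult_distrib d by (simp add: algebra_simps)
  moreover have "0 \<le> dist_d P i" for i
    using dist_d_hyp(2)[OF assms, of i] by (rule order_trans[rotated]) simp
  ultimately show "dist_d P 0 \<le> dist_d P 1 * dist_d P 2"
    using power2_le_imp_le mult_nonneg_nonneg by blast
qed

lemma three_rho_bounds: "3/2 + 2/sqrt 3 \<le> 3*rho" "2 \<le> 3*rho"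
proof -
  have "0 \<le> 1/sqrt 3" "1/sqrt 3 \<le> 13/18"
    using real_le_rsqrt[of "18/13" 3] by (simp_all add: field_simps)
  moreover have "3*rho = 20/9 + 1/sqrt 3" unfolding rho_def by simp
  ultimately show "3/2 + 2/sqrt 3 \<le> 3*rho" "2 \<le> 3*rho" by (simp, linarith)
qed

context
  fixes d0 d1 d2 :: real
  assumes sqrt3_le_d1: "sqrt 3 \<le> d1" and sqrt3_le_d2: "sqrt 3 \<le> d2"
    and d1_le_d0: "d1 \<le> d0" and d2_le_d0: "d2 \<le> d0"
begin

lemma one_le_dists: "1 \<le> d0" "1 \<le> d1" "1 \<le> d2"
  using sqrt3_le_d1 sqrt3_le_d2 d1_le_d0 real_sqrt_ge_one[of 3] by linarith+

lemma three_le_mult_dists: "3 \<le> d1*d2"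
  using mult_mono[OF sqrt3_le_d1 sqrt3_le_d2] one_le_dists by simp

lemma two_mult_dists_le: "2*(d1*d2) \<le> d0*(d1+d2)"
proof -
  have "d1*d2 \<le> d0*d2" "d2*d1 \<le> d0*d1"
    using d1_le_d0 d2_le_d0 one_le_dists by (simp_all add: mult_right_mono)
  then show ?thesis by (simp add: algebra_simps)
qed

lemma r_d_numerator_abs_le:
  fixes x e :: real
  assumes x: "\<bar>x\<bar> \<le> (d1^2-1)*(d2^2-1)/4" and e: "\<bar>e\<bar> = 1"
  shows "\<bar>(d0^2+d1^2+d2^2-1)*(d0*d1*d2-d0-d1-d2) - 2*e*x*(d0*d1+d1*d2+d2*d0-1)\<bar>
         \<le> (d0^2+d1^2+d2^2)*(d0*d1*d2) + (d1*d2)^2/2 * (d0*(d1+d2) + d1*d2)"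
proof -
  define S T B where "S = d0^2+d1^2+d2^2" and "T = d0*d1*d2-d0-d1-d2"
    and "B = d0*d1+d1*d2+d2*d0-1"
  have "3*d0 \<le> d0*d1*d2"
    using mult_right_mono[OF three_le_mult_dists, of d0] one_le_dists by (simp add: mult_ac)
  then have T: "0 \<le> T" "T \<le> d0*d1*d2"
    unfolding T_def using d1_le_d0 d2_le_d0 one_le_dists by linarith+
  have B: "0 \<le> B" "B \<le> d0*(d1+d2) + d1*d2"
    unfolding B_def using two_mult_dists_le three_le_mult_dists by (simp_all add: algebra_simps)
  have S: "1 \<le> S" unfolding S_def using one_le_dists by (simp add: add_increasing)
  have "\<bar>(S-1)*T\<bar> \<le> S*(d0*d1*d2)"
    using S T mult_mono[of "S-1" S T "d0*d1*d2"] by simp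
  moreover have "\<bar>x\<bar> \<le> (d1*d2)^2/4"
    using x mult_mono[of "d1^2-1" "d1^2" "d2^2-1" "d2^2"] one_le_dists
    by (simp add: power_mult_distrib)
  then have "\<bar>2*e*x*B\<bar> \<le> 2*((d1*d2)^2/4)*(d0*(d1+d2) + d1*d2)"
    using e B mult_mono[of "\<bar>x\<bar>" "(d1*d2)^2/4" B "d0*(d1+d2) + d1*d2"]
    by (simp add: abs_mult mult_ac)
  ultimately have "\<bar>(S-1)*T - 2*e*x*B\<bar> \<le> S*(d0*d1*d2) + (d1*d2)^2/2 * (d0*(d1+d2) + d1*d2)"
    using abs_triangle_ineq4[of "(S-1)*T" "2*e*x*B"] by linarith
  then show ?thesis unfolding S_def T_def B_def .
qed

lemma cubic_term_le:
  assumes "d0 \<le> d1*d2"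
  shows "4*d0^3*(d1*d2) \<le> (2/sqrt 3) * ((d1*d2)^2*(d0^2+1)*(d1+d2))"
proof -
  have "d0^3*(d1*d2) \<le> d0^2*(d1*d2)^2"
    using mult_left_mono[OF assms, of "d0^2*(d1*d2)"] one_le_dists
    by (simp add: power2_eq_square power3_eq_cube mult_ac)
  also have "\<dots> \<le> (d1*d2)^2*(d0^2+1)" by (simp add: algebra_simps)
  finally have cube: "d0^3*(d1*d2) \<le> (d1*d2)^2*(d0^2+1)" .
  have four: "4 \<le> (2/sqrt 3)*(d1+d2)"
    using sqrt3_le_d1 sqrt3_le_d2 by (simp add: field_simps)
  have "4*d0^3*(d1*d2) = 4*(d0^3*(d1*d2))" by simp
  also have "\<dots> \<le> ((2/sqrt 3)*(d1+d2))*((d1*d2)^2*(d0^2+1))"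
    by (rule mult_mono[OF four cube]) (use one_le_dists in simp_all)
  also have "\<dots> = (2/sqrt 3) * ((d1*d2)^2*(d0^2+1)*(d1+d2))" by (simp only: mult_ac)
  finally show ?thesis .
qed

lemma r_d_numerator_bound_le:
  assumes "d0 \<le> d1*d2"
  shows "4*((d0^2+d1^2+d2^2)*(d0*d1*d2) + (d1*d2)^2/2 * (d0*(d1+d2) + d1*d2))
         \<le> 3*rho * ((d0^2+1)*(d1^2+1)*(d2^2+1)*(d1+d2))"
proof -
  define D X Y where "D = d1*d2" and "X = D^2*(d0^2+1)*(d1+d2)"
    and "Y = (d0^2+1)*(d1^2+d2^2+1)*(d1+d2)"
  have pos: "0 < d0" "0 < d1" "0 < d2" using one_le_dists by linarith+
  have X: "0 \<le> X" and Y: "0 \<le> Y" unfolding X_def Y_def using pos by simp_all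
  have d0: "2*d0 \<le> d0^2 + 1"
    using zero_le_power2[of "d0 - 1"] by (simp add: power2_eq_square algebra_simps)
  have D: "2*D \<le> d0*(d1+d2)" unfolding D_def by (rule two_mult_dists_le)
  have t1: "2*D^2*d0*(d1+d2) \<le> X"
    unfolding X_def using mult_left_mono[OF d0, of "D^2*(d1+d2)"] pos by (simp add: mult_ac)
  have "4*D \<le> (d0^2+1)*(d1+d2)"
    using D mult_right_mono[OF d0, of "d1+d2"] pos by (simp add: algebra_simps)
  then have t2: "2*D^3 \<le> X/2" unfolding X_def
    using mult_left_mono[of "4*D" "(d0^2+1)*(d1+d2)" "D^2"]
    by (simp add: power3_eq_cube power2_eq_square mult_ac)
  have t3: "4*d0^3*D \<le> (2/sqrt 3)*X"
    unfolding D_def X_def using cubic_term_le[OF assms] .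
  have "4*(d1^2+d2^2)*d0*D \<le> 2*(d1^2+d2^2)*d0^2*(d1+d2)"
    using mult_left_mono[OF D, of "2*(d1^2+d2^2)*d0"] pos by (simp add: power2_eq_square mult_ac)
  also have "\<dots> \<le> 2*Y" unfolding Y_def
    using mult_right_mono[of "(d1^2+d2^2)*d0^2" "(d0^2+1)*(d1^2+d2^2+1)" "d1+d2"] pos
    by (simp add: algebra_simps)
  finally have t4: "4*(d1^2+d2^2)*d0*D \<le> 2*Y" .
  have "4*((d0^2+d1^2+d2^2)*(d0*d1*d2) + (d1*d2)^2/2 * (d0*(d1+d2) + d1*d2))
      = 4*d0^3*D + 4*(d1^2+d2^2)*d0*D + 2*D^2*d0*(d1+d2) + 2*D^3"
    unfolding D_def by (simp add: power2_eq_square power3_eq_cube algebra_simps)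
  also have "\<dots> \<le> (3/2 + 2/sqrt 3)*X + 2*Y"
    using t1 t2 t3 t4 by (simp add: algebra_simps)
  also have "\<dots> \<le> 3*rho*(X + Y)"
    using mult_right_mono[OF three_rho_bounds(1) X] mult_right_mono[OF three_rho_bounds(2) Y]
    by (simp add: algebra_simps)
  also have "X + Y = (d0^2+1)*(d1^2+1)*(d2^2+1)*(d1+d2)"
    unfolding X_def Y_def D_def by (simp add: power2_eq_square algebra_simps)
  finally show ?thesis .
qed

lemma r_d_abs_le:
  fixes a x e :: real
  assumes "d0 \<le> d1*d2" and a: "2*a = 1 - (d0^2+d1^2+d2^2)"
    and "\<bar>x\<bar> \<le> (d1^2-1)*(d2^2-1)/4" and "\<bar>e\<bar> = 1"
  shows "\<bar>4 / (3*(d0^2+1)*(d1^2+1)*(d2^2+1)) *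
      (- 2 * a * (d0*d1*d2-d0-d1-d2) - 2 * e * x * (d0*d1+d1*d2+d2*d0-1))\<bar> \<le> rho*(d1+d2)"
proof -
  define N where "N = (d0^2+d1^2+d2^2-1)*(d0*d1*d2-d0-d1-d2) - 2*e*x*(d0*d1+d1*d2+d2*d0-1)"
  define G where "G = 3*(d0^2+1)*(d1^2+1)*(d2^2+1)"
  have "0 < G" unfolding G_def by (intro mult_pos_pos) (simp_all add: add_nonneg_pos)
  have "4*\<bar>N\<bar> \<le> 4*((d0^2+d1^2+d2^2)*(d0*d1*d2) + (d1*d2)^2/2 * (d0*(d1+d2) + d1*d2))"
    unfolding N_def using r_d_numerator_abs_le[OF assms(3,4)] by (rule mult_left_mono) simp
  also have "\<dots> \<le> 3*rho * ((d0^2+1)*(d1^2+1)*(d2^2+1)*(d1+d2))"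
    using r_d_numerator_bound_le assms by simp
  also have "\<dots> = rho*(d1+d2)*G" unfolding G_def by (simp add: mult_ac)
  finally have "4*\<bar>N\<bar> / G \<le> rho*(d1+d2)" using \<open>0 < G\<close> by (simp add: pos_divide_le_eq)
  moreover have "- 2 * a = d0^2+d1^2+d2^2-1" using a by simp
  ultimately show ?thesis
    using \<open>0 < G\<close> unfolding G_def[symmetric] \<open>- 2 * a = _\<close> N_def[symmetric]
    by (simp add: abs_mult)
qed

end

theorem proposition5p1:
  fixes P :: "nat \<Rightarrow> real^3" and \<epsilon> :: real
  assumes "\<And>i. i < 3 \<Longrightarrow> P i \<in> hyp"
    and "\<And>i j. i < 3 \<Longrightarrow> j < 3 \<Longrightarrow> i \<noteq> j \<Longrightarrow> P i \<noteq> P j"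
    and "chi_val P \<ge> 0"
    and "dist_d P 0 = Max {dist_d P 0, dist_d P 1, dist_d P 2}"
    and "\<epsilon> \<in> {-1, 1}"
  shows "\<forall>i < 3. r_i P \<epsilon> i \<le> rho"
proof -
  have on_hyp: "P ` {..<3} \<subseteq> hyp" using assms(1) by auto
  have d_ge: "sqrt 3 \<le> dist_d P i" for i using dist_d_hyp(2)[OF on_hyp] .
  have d_le: "dist_d P 1 \<le> dist_d P 0" "dist_d P 2 \<le> dist_d P 0"
    by (subst assms(4), simp)+
  have "\<bar>\<epsilon>\<bar> = 1" using assms(5) by auto
  then have "\<bar>r_d P \<epsilon>\<bar> \<le> rho * (dist_d P 1 + dist_d P 2)"
    unfolding r_d_def gamma_val_def
    by (rule r_d_abs_le[OF d_ge d_ge d_le chi_val_dist_d_bounds_hyp(2)[OF on_hyp]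
          alpha_val_hyp[OF on_hyp] chi_val_dist_d_bounds_hyp(1)[OF on_hyp]])
  moreover have "0 \<le> rho" unfolding rho_def by simp
  moreover have "0 < dist_d P i" for i using d_ge[of i] real_sqrt_gt_zero[of 3] by linarith
  ultimately have "r_i P \<epsilon> i \<le> rho"
    if "dist_d P 1 + dist_d P 2 \<le> dist_d P ((i+1) mod 3) + dist_d P ((i+2) mod 3)" for i
    unfolding r_i_def using mult_left_mono[OF that \<open>0 \<le> rho\<close>]
    by (simp add: add_pos_pos divide_le_eq)
  moreover have "dist_d P 1 + dist_d P 2 \<le> dist_d P ((i+1) mod 3) + dist_d P ((i+2) mod 3)"
    if "i < 3" for i
  proof -
    have "i = 0 \<or> i = 1 \<or> i = 2" using that by arith
    then show ?thesis using d_le by (auto simp: numeral_2_eq_2)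
  qed
  ultimately show ?thesis by blast
qed

end
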